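(* Let $(\alpha_n)_{n\ge0}$ be complex numbers with $|\alpha_n|<1$, let $n,r,s$ be nonnegative integers, and suppose $\alpha_i\neq0$ for $0\le i\le n+r$. If $n\ge1$, then \[ \eta_{n,r,s}=-\left(\overline{\alpha_{s-1}}\right)^{-1}\sum_p\mathrm{wt}_S(p), \] where the sum is over all Schröder paths from $(0,r)$ to $(n,s)$ that neither start nor end with a vertical down-step $(0,-1)$. If $n=0$, then \[ \eta_{0,r,s}=\begin{cases}-\dfrac{1}{\overline{\alpha_{r-1}}}&\text{if } s=r,\\[2pt] \dfrac{1-|\alpha_{r-1}|^2}{\overline{\alpha_{r-1}}}&\text{if } s=r-1,\\[2pt] 0&\text{otherwise.}\end{cases} \]
   Context: For a polynomial $f(z)=\sum_{k=0}^n a_kz^k$ of degree $n$, write $\overline{f}(z)=\sum_k\overline{a_k}z^k$ and $f^*(z)=z^n\overline{f}(1/z)$. Define monic $\Phi_n$ by $\Phi_0=1$, $\Phi_{n+1}(z)=z\Phi_n(z)-\overline{\alpha_n}\Phi_n^*(z)$, where $\Phi_n^*(z)=z^n\overline{\Phi_n}(1/z)$. Set $\alpha_{-1}=-1$. Under the hypothesis, the polynomials $\Phi_0^*,\dots,\Phi_{n+r}^*$ have degrees $0,\dots,n+r$, so there are unique coefficients $c_{n,r,s}$ with $z^n\Phi_r(z)=\sum_{s=0}^{n+r}c_{n,r,s}\Phi_s^*(z)$; set $c_{n,r,s}=0$ for $s>n+r$ and $\eta_{n,r,s}=\overline{c_{n,r,s}}$. A Schröder path is a lattice path in $\mathbb{Z}\times\mathbb{Z}_{\ge0}$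 with steps $(1,1)$, $(1,0)$, $(0,-1)$. $\mathrm{wt}_S(p)$ is the product of step weights: $(a,b)\to(a+1,b+1)$ weight $1$; $(a,b)\to(a+1,b)$ weight $-\overline{\alpha_{b-1}}/\overline{\alpha_b}$; $(a,b)\to(a,b-1)$ weight $\frac{\overline{\alpha_{b-2}}}{\overline{\alpha_{b-1}}}(1-|\alpha_{b-1}|^2)$. *)

theory Defs
  imports Complex_Main "HOL-Computational_Algebra.Polynomial"
begin

definition al :: "(nat \<Rightarrow> complex) \<Rightarrow> int \<Rightarrow> complex" where
  "al a k = (if k = -1 then -1 else a (nat k))"

text \<open>f^*(z) = z^(deg f) * conj-coefficient f (1/z)\<close>
definition pstar :: "complex poly \<Rightarrow> complex poly" where
  "pstar f = (\<Sum>k\<le>degree f. monom (cnj (coeff f (degree f - k))) k)"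

primrec Phi :: "(nat \<Rightarrow> complex) \<Rightarrow> nat \<Rightarrow> complex poly" where
  "Phi a 0 = 1"
| "Phi a (Suc n) = [:0, 1:] * Phi a n - smult (cnj (a n)) (pstar (Phi a n))"

definition Phistar :: "(nat \<Rightarrow> complex) \<Rightarrow> nat \<Rightarrow> complex poly" where
  "Phistar a n = pstar (Phi a n)"

definition cc :: "(nat \<Rightarrow> complex) \<Rightarrow> nat \<Rightarrow> nat \<Rightarrow> nat \<Rightarrow> complex" where
  "cc a n r = (THE c. (\<forall>s>n+r. c s = 0) \<and>
      monom 1 n * Phi a r = (\<Sum>s\<le>n+r. smult (c s) (Phistar a s)))"

definition eta :: "(nat \<Rightarrow> complex) \<Rightarrow> nat \<Rightarrow> nat \<Rightarrow> nat \<Rightarrow> complex" where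
  "eta a n r s = cnj (cc a n r s)"

text \<open>Schroeder paths as step sequences: Up = (1,1), Flat = (1,0), Down = (0,-1).\<close>
datatype step = Up | Flat | Down

fun valid_path :: "int \<Rightarrow> step list \<Rightarrow> bool" where
  "valid_path b [] = True"
| "valid_path b (Up # p) = valid_path (b + 1) p"
| "valid_path b (Flat # p) = valid_path b p"
| "valid_path b (Down # p) = (b \<ge> 1 \<and> valid_path (b - 1) p)"

fun end_height :: "int \<Rightarrow> step list \<Rightarrow> int" where
  "end_height b [] = b"
| "end_height b (Up # p) = end_height (b + 1) p"
| "end_height b (Flat # p) = end_height b p"
| "end_height b (Down # p) = end_height (b - 1) p"

definition x_length :: "step list \<Rightarrow> nat" where
  "x_length p = length (filter (\<lambda>t. t \<noteq> Down) p)"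

fun wtS :: "(nat \<Rightarrow> complex) \<Rightarrow> int \<Rightarrow> step list \<Rightarrow> complex" where
  "wtS a b [] = 1"
| "wtS a b (Up # p) = wtS a (b + 1) p"
| "wtS a b (Flat # p) = (- cnj (al a (b - 1)) / cnj (al a b)) * wtS a b p"
| "wtS a b (Down # p) =
     (cnj (al a (b - 2)) / cnj (al a (b - 1)) * (1 - (cmod (al a (b - 1)))\<^sup>2)) * wtS a (b - 1) p"

definition schroeder_paths :: "nat \<Rightarrow> nat \<Rightarrow> nat \<Rightarrow> step list set" where
  "schroeder_paths n r s = {p. valid_path (int r) p \<and> x_length p = n \<and>
      end_height (int r) p = int s \<and> (p \<noteq> [] \<longrightarrow> hd p \<noteq> Down \<and> last p \<noteq> Down)}"

end

(* Write B_s = Phi*_s / alpha_(s-1), so B_0 = -1. For alpha_b, alpha_(b-1) nonzero, Szego's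
   recursion becomes
     z Phi_b = - (B_(b+1) + conj (wF b) B_b)    and    B_(b+1) = conj (wD (b+1)) B_b - Phi_(b+1),
   where wF b and wD (b+1) are the weights of a flat step at height b and of a down-step from
   height b+1. Read as first-step decompositions of paths, these identities show by induction
   on (m, b) that z^m B_b = sum_s conj (V m b s) B_s, where V m b s is the total weight of the
   Schroeder paths from (0,b) to (m,s) not ending with a down-step; one more application of the
   first identity gives z^(m+1) Phi_r = - sum_s conj (S s) B_s, with S s the total weight of the
   paths of the theorem. As Phi*_s has degree s and leading coefficient -alpha_(s-1), this is the expansion
   defining c_(n,r,s). For n = 0 the second identity alone gives Phi_r in the basis B. *)

theory Submission
  imports Defs
begin

lemma smult_sum_right: "smult c (\<Sum>i\<in>A. f i) = (\<Sum>i\<in>A. smult c (f i))"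
  by (induction A rule: infinite_finite_induct) (simp_all add: smult_add_right)

lemma coeff_pstar:
  "coeff (pstar f) k = (if k \<le> degree f then cnj (coeff f (degree f - k)) else 0)"
  unfolding pstar_def coeff_sum by (auto simp: coeff_monom)

lemma degree_pstar_le: "degree (pstar f) \<le> degree f"
  by (rule degree_le) (simp add: coeff_pstar)

lemma Phi_monic: "degree (Phi a s) = s \<and> coeff (Phi a s) s = 1"
proof (induction s)
  case (Suc s)
  have Phi_Suc: "Phi a (Suc s) = pCons 0 (Phi a s) - smult (cnj (a s)) (pstar (Phi a s))"
    by simp
  have low: "degree (smult (cnj (a s)) (pstar (Phi a s))) \<le> s"
    using degree_pstar_le degree_smult_le Suc.IH order.trans by metis
  then have "coeff (smult (cnj (a s)) (pstar (Phi a s))) (Suc s) = 0"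
    by (simp add: coeff_eq_0 del: coeff_smult)
  with low have "degree (Phi a (Suc s)) \<le> Suc s" "coeff (Phi a (Suc s)) (Suc s) = 1"
    unfolding Phi_Suc using Suc.IH by (auto intro!: degree_diff_le simp: coeff_eq_0)
  then show ?case using le_degree by (metis le_antisym one_neq_zero)
qed simp

lemma degree_Phi [simp]: "degree (Phi a s) = s"
  using Phi_monic by blast

lemma Phistar_0: "Phistar a 0 = 1"
  by (simp add: Phistar_def pstar_def)

lemma Phistar_Suc: "Phistar a (Suc s) = Phistar a s - smult (a s) (pCons 0 (Phi a s))"
proof (rule poly_eqI)
  fix k
  have coeff_Phi_Suc: "coeff (Phi a (Suc s)) j = (if j = 0 then 0 else coeff (Phi a s) (j - 1))
      - cnj (a s) * (if j \<le> s then cnj (coeff (Phi a s) (s - j)) else 0)" for j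
    by (cases j) (simp_all add: coeff_pstar)
  show "coeff (Phistar a (Suc s)) k = coeff (Phistar a s - smult (a s) (pCons 0 (Phi a s))) k"
    unfolding Phistar_def coeff_pstar degree_Phi coeff_Phi_Suc
    by (cases k) (auto simp: Suc_diff_le coeff_eq_0 coeff_pstar simp del: Phi.simps)
qed

lemma degree_Phistar_le: "degree (Phistar a s) \<le> s"
  unfolding Phistar_def using degree_pstar_le degree_Phi by metis

lemma coeff_Phistar_self: "coeff (Phistar a s) s = - al a (int s - 1)"
  by (cases s) (simp_all add: Phistar_0 Phistar_Suc al_def Phi_monic
      coeff_eq_0[OF le_imp_less_Suc[OF degree_Phistar_le]])

lemma Phistar_Suc_Phi: "Phistar a (Suc s) =
    smult (1 - (cmod (a s))\<^sup>2) (Phistar a s) - smult (a s) (Phi a (Suc s))"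
proof -
  have Phi_Suc: "Phi a (Suc s) = pCons 0 (Phi a s) - smult (cnj (a s)) (Phistar a s)"
    by (simp add: Phistar_def)
  have "a s * cnj (a s) + (1 - (cmod (a s))\<^sup>2) = 1"
    by (simp add: complex_norm_square[symmetric])
  then show ?thesis
    unfolding Phistar_Suc Phi_Suc
    by (simp add: smult_diff_right algebra_simps flip: smult_add_left)
qed

definition no_last_down_paths :: "nat \<Rightarrow> nat \<Rightarrow> nat \<Rightarrow> step list set" where
  "no_last_down_paths n r s = {p. valid_path (int r) p \<and> x_length p = n \<and>
      end_height (int r) p = int s \<and> (p \<noteq> [] \<longrightarrow> last p \<noteq> Down)}"

lemma x_length_simps [simp]:
  "x_length [] = 0" "x_length (Up # p) = Suc (x_length p)"
  "x_length (Flat # p) = Suc (x_length p)" "x_length (Down # p) = x_length p"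
  by (simp_all add: x_length_def)

lemma end_height_le: "end_height b p \<le> b + int (x_length p)"
  by (induction b p rule: end_height.induct) force+

lemma Up_Cons_in_no_last_down_paths:
  "Up # p \<in> no_last_down_paths n r s \<longleftrightarrow> n \<noteq> 0 \<and> p \<in> no_last_down_paths (n - 1) (Suc r) s"
  by (auto simp: no_last_down_paths_def add.commute)

lemma Flat_Cons_in_no_last_down_paths:
  "Flat # p \<in> no_last_down_paths n r s \<longleftrightarrow> n \<noteq> 0 \<and> p \<in> no_last_down_paths (n - 1) r s"
  by (auto simp: no_last_down_paths_def)

lemma Down_Cons_in_no_last_down_paths:
  "Down # p \<in> no_last_down_paths n r s \<longleftrightarrow>
     r \<noteq> 0 \<and> p \<noteq> [] \<and> p \<in> no_last_down_paths n (r - 1) s"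
  by (cases "r = 0") (auto simp: no_last_down_paths_def of_nat_diff)

lemmas Cons_in_no_last_down_paths = Up_Cons_in_no_last_down_paths
  Flat_Cons_in_no_last_down_paths Down_Cons_in_no_last_down_paths

lemma schroeder_paths_eq:
  "schroeder_paths n r s = {p \<in> no_last_down_paths n r s. p \<noteq> [] \<longrightarrow> hd p \<noteq> Down}"
  by (auto simp: schroeder_paths_def no_last_down_paths_def)

lemma Nil_in_no_last_down_paths: "[] \<in> no_last_down_paths n r s \<longleftrightarrow> n = 0 \<and> r = s"
  by (auto simp: no_last_down_paths_def)

lemma no_last_down_paths_0: "no_last_down_paths 0 r s = (if r = s then {[]} else {})"
proof -
  have "p \<notin> no_last_down_paths 0 r s" if "p \<noteq> []" for p
    using that
  proof (induction p arbitrary: r)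
    case (Cons x p)
    then show ?case by (cases x) (auto simp: Cons_in_no_last_down_paths)
  qed simp
  then show ?thesis
    using Nil_in_no_last_down_paths[of 0 r s] by (auto intro!: set_eqI) metis
qed

lemma schroeder_paths_Suc:
  "schroeder_paths (Suc n) r s =
     Cons Up ` no_last_down_paths n (Suc r) s \<union> Cons Flat ` no_last_down_paths n r s"
proof (rule set_eqI)
  fix p
  show "p \<in> schroeder_paths (Suc n) r s \<longleftrightarrow>
      p \<in> Cons Up ` no_last_down_paths n (Suc r) s \<union> Cons Flat ` no_last_down_paths n r s"
  proof (cases p)
    case (Cons x q)
    then show ?thesis
      by (cases x) (auto simp: schroeder_paths_eq Cons_in_no_last_down_paths)
  qed (auto simp: schroeder_paths_eq Nil_in_no_last_down_paths)
qed

lemma no_last_down_paths_Suc: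
  "no_last_down_paths (Suc n) r s = schroeder_paths (Suc n) r s \<union>
     (if r = 0 then {} else Cons Down ` no_last_down_paths (Suc n) (r - 1) s)"
proof (rule set_eqI)
  fix p
  show "p \<in> no_last_down_paths (Suc n) r s \<longleftrightarrow> p \<in> schroeder_paths (Suc n) r s \<union>
     (if r = 0 then {} else Cons Down ` no_last_down_paths (Suc n) (r - 1) s)"
  proof (cases p)
    case (Cons x q)
    then show ?thesis
      by (cases x)
        (auto simp: schroeder_paths_eq Cons_in_no_last_down_paths Nil_in_no_last_down_paths)
  qed (auto simp: schroeder_paths_eq Nil_in_no_last_down_paths)
qed

definition flat_weight :: "(nat \<Rightarrow> complex) \<Rightarrow> nat \<Rightarrow> complex" where
  "flat_weight a b = - cnj (al a (int b - 1)) / cnj (al a (int b))"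

definition down_weight :: "(nat \<Rightarrow> complex) \<Rightarrow> nat \<Rightarrow> complex" where
  "down_weight a b =
     cnj (al a (int b - 2)) / cnj (al a (int b - 1)) * (1 - (cmod (al a (int b - 1)))\<^sup>2)"

lemma wtS_Up_Cons: "wtS a (int b) (Up # p) = wtS a (int (Suc b)) p"
  by (simp add: add.commute)

lemma wtS_Flat_Cons: "wtS a (int b) (Flat # p) = flat_weight a b * wtS a (int b) p"
  by (simp add: flat_weight_def)

lemma wtS_Down_Cons:
  "b \<noteq> 0 \<Longrightarrow> wtS a (int b) (Down # p) = down_weight a b * wtS a (int (b - 1)) p"
  by (simp add: down_weight_def of_nat_diff)

definition no_last_down_weight :: "(nat \<Rightarrow> complex) \<Rightarrow> nat \<Rightarrow> nat \<Rightarrow> nat \<Rightarrow> complex" where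
  "no_last_down_weight a n r s = (\<Sum>p\<in>no_last_down_paths n r s. wtS a (int r) p)"

definition schroeder_weight :: "(nat \<Rightarrow> complex) \<Rightarrow> nat \<Rightarrow> nat \<Rightarrow> nat \<Rightarrow> complex" where
  "schroeder_weight a n r s = (\<Sum>p\<in>schroeder_paths n r s. wtS a (int r) p)"

lemma finite_no_last_down_paths: "finite (no_last_down_paths n r s)"
proof (induction n arbitrary: r)
  case 0
  then show ?case by (simp add: no_last_down_paths_0)
next
  case (Suc n)
  show ?case
    by (induction r) (simp_all add: no_last_down_paths_Suc schroeder_paths_Suc Suc.IH)
qed

lemma finite_schroeder_paths: "finite (schroeder_paths n r s)"
  using finite_no_last_down_paths by (simp add: schroeder_paths_eq)

lemma no_last_down_weight_0: "no_last_down_weight a 0 r s = (if r = s then 1 else 0)"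
  by (simp add: no_last_down_weight_def no_last_down_paths_0)

lemma schroeder_weight_Suc:
  "schroeder_weight a (Suc n) r s =
     no_last_down_weight a n (Suc r) s + flat_weight a r * no_last_down_weight a n r s"
proof -
  have "Cons Up ` no_last_down_paths n (Suc r) s \<inter> Cons Flat ` no_last_down_paths n r s = {}"
    by auto
  then show ?thesis
    unfolding schroeder_weight_def no_last_down_weight_def schroeder_paths_Suc
    by (simp add: sum.union_disjoint finite_no_last_down_paths sum.reindex sum_distrib_left
        wtS_Up_Cons wtS_Flat_Cons del: wtS.simps of_nat_Suc)
qed

lemma no_last_down_weight_Suc:
  "no_last_down_weight a (Suc n) r s = schroeder_weight a (Suc n) r s +
     (if r = 0 then 0 else down_weight a r * no_last_down_weight a (Suc n) (r - 1) s)"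
proof -
  have "schroeder_paths (Suc n) r s \<inter> Cons Down ` no_last_down_paths (Suc n) (r - 1) s = {}"
    by (auto simp: schroeder_paths_eq)
  then show ?thesis
    unfolding schroeder_weight_def no_last_down_weight_def no_last_down_paths_Suc[of n r]
    by (simp add: sum.union_disjoint finite_no_last_down_paths finite_schroeder_paths
        sum.reindex sum_distrib_left wtS_Down_Cons del: wtS.simps)
qed

lemma schroeder_weight_eq_0: "n + r < s \<Longrightarrow> schroeder_weight a n r s = 0"
proof -
  assume "n + r < s"
  have "int s \<le> int r + int n" if "p \<in> schroeder_paths n r s" for p
    using that end_height_le[of "int r" p] by (simp add: schroeder_paths_def)
  with \<open>n + r < s\<close> have "schroeder_paths n r s = {}"
    by force
  then show ?thesis by (simp add: schroeder_weight_def)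
qed

lemma al_of_nat [simp]: "al a (int b) = a b"
  by (simp add: al_def)

lemma al_nonzero: "\<forall>i<N. a i \<noteq> 0 \<Longrightarrow> s \<le> N \<Longrightarrow> al a (int s - 1) \<noteq> 0"
  by (cases s) (auto simp: al_def)

definition Phistar_normed :: "(nat \<Rightarrow> complex) \<Rightarrow> nat \<Rightarrow> complex poly" where
  "Phistar_normed a s = smult (inverse (al a (int s - 1))) (Phistar a s)"

definition normed_comb ::
    "(nat \<Rightarrow> complex) \<Rightarrow> nat \<Rightarrow> (nat \<Rightarrow> complex) \<Rightarrow> complex poly" where
  "normed_comb a K w = (\<Sum>s\<le>K. smult (cnj (w s)) (Phistar_normed a s))"

lemma normed_comb_add_mult:
  "normed_comb a K (\<lambda>s. v s + c * w s) = normed_comb a K v + smult (cnj c) (normed_comb a K w)"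
  by (simp add: normed_comb_def smult_add_left sum.distrib smult_sum_right)

lemma normed_comb_indicator:
  assumes "b \<le> K"
  shows "normed_comb a K (\<lambda>s. if b = s then 1 else 0) = Phistar_normed a b"
proof -
  have "normed_comb a K (\<lambda>s. if b = s then 1 else 0) =
      (\<Sum>s\<le>K. if b = s then Phistar_normed a s else 0)"
    unfolding normed_comb_def by (rule sum.cong) auto
  with assms show ?thesis by simp
qed

lemma Phistar_normed_0: "Phistar_normed a 0 = - Phi a 0"
  by (simp add: Phistar_normed_def Phistar_0 al_def one_pCons)

lemma pCons_0_Phi:
  assumes "a b \<noteq> 0" "al a (int b - 1) \<noteq> 0"
  shows "pCons 0 (Phi a b) =
    - (Phistar_normed a (Suc b) + smult (cnj (flat_weight a b)) (Phistar_normed a b))"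
  using assms
  by (simp add: Phistar_normed_def Phistar_Suc flat_weight_def smult_diff_right
      field_simps del: Phi.simps)

lemma Phistar_normed_Suc:
  assumes "a b \<noteq> 0" "al a (int b - 1) \<noteq> 0"
  shows "Phistar_normed a (Suc b) =
    smult (cnj (down_weight a (Suc b))) (Phistar_normed a b) - Phi a (Suc b)"
proof -
  have "cnj (down_weight a (Suc b)) * inverse (al a (int b - 1)) = (1 - (cmod (a b))\<^sup>2) / a b"
    using assms by (simp add: down_weight_def field_simps)
  with assms(1) show ?thesis
    by (simp add: Phistar_normed_def Phistar_Suc_Phi smult_diff_right divide_inverse mult.commute
        del: Phi.simps)
qed

lemma monom_Suc_mult_Phi_of_Phistar_normed:
  assumes "a b \<noteq> 0" "al a (int b - 1) \<noteq> 0"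
    and "monom 1 m * Phistar_normed a b = normed_comb a K (no_last_down_weight a m b)"
    and "monom 1 m * Phistar_normed a (Suc b) = normed_comb a K (no_last_down_weight a m (Suc b))"
  shows "monom 1 (Suc m) * Phi a b = - normed_comb a K (schroeder_weight a (Suc m) b)"
proof -
  have "monom 1 (Suc m) * Phi a b = monom 1 m * pCons 0 (Phi a b)"
    by (simp add: monom_Suc)
  also have "\<dots> = - (monom 1 m * Phistar_normed a (Suc b)
      + smult (cnj (flat_weight a b)) (monom 1 m * Phistar_normed a b))"
    by (simp add: pCons_0_Phi[OF assms(1,2)] algebra_simps del: Phi.simps)
  also have "\<dots> = - normed_comb a K
      (\<lambda>s. no_last_down_weight a m (Suc b) s + flat_weight a b * no_last_down_weight a m b s)"
    by (simp add: assms(3,4) normed_comb_add_mult)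
  also have "(\<lambda>s. no_last_down_weight a m (Suc b) s + flat_weight a b * no_last_down_weight a m b s)
      = schroeder_weight a (Suc m) b"
    by (simp add: fun_eq_iff schroeder_weight_Suc)
  finally show ?thesis .
qed

lemma monom_mult_Phistar_normed:
  assumes "\<forall>i<b + m. a i \<noteq> 0" "b + m \<le> K"
  shows "monom 1 m * Phistar_normed a b = normed_comb a K (no_last_down_weight a m b)"
  using assms
proof (induction m arbitrary: b)
  case 0
  then show ?case
    by (simp add: no_last_down_weight_0 normed_comb_indicator)
next
  case (Suc m)
  note IH_Phistar = Suc.IH
  from Suc.prems show ?case
  proof (induction b)
    case 0
    have "monom 1 (Suc m) * Phi a 0 = - normed_comb a K (schroeder_weight a (Suc m) 0)"
      by (rule monom_Suc_mult_Phi_of_Phistar_normed)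
        (use 0 IH_Phistar[of 0] IH_Phistar[of 1] in \<open>auto simp: al_def\<close>)
    then show ?case
      by (simp add: Phistar_normed_0 fun_eq_iff no_last_down_weight_Suc[of a m 0] del: Phi.simps)
  next
    case (Suc j)
    have nz: "a j \<noteq> 0" "al a (int j - 1) \<noteq> 0" "a (Suc j) \<noteq> 0"
      using Suc.prems al_nonzero[of "Suc j + Suc m" a j] by auto
    have Phi: "monom 1 (Suc m) * Phi a (Suc j) =
        - normed_comb a K (schroeder_weight a (Suc m) (Suc j))"
      by (rule monom_Suc_mult_Phi_of_Phistar_normed)
        (use nz Suc.prems IH_Phistar[of "Suc j"] IH_Phistar[of "Suc (Suc j)"] in auto)
    have "monom 1 (Suc m) * Phistar_normed a (Suc j) =
        smult (cnj (down_weight a (Suc j))) (monom 1 (Suc m) * Phistar_normed a j)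
        - monom 1 (Suc m) * Phi a (Suc j)"
      by (simp add: Phistar_normed_Suc[OF nz(1,2)] algebra_simps del: Phi.simps)
    also have "\<dots> = normed_comb a K (\<lambda>s. schroeder_weight a (Suc m) (Suc j) s
        + down_weight a (Suc j) * no_last_down_weight a (Suc m) j s)"
      using Suc.IH Suc.prems by (simp add: Phi normed_comb_add_mult del: Phi.simps)
    also have "(\<lambda>s. schroeder_weight a (Suc m) (Suc j) s
        + down_weight a (Suc j) * no_last_down_weight a (Suc m) j s)
        = no_last_down_weight a (Suc m) (Suc j)"
      by (simp add: fun_eq_iff no_last_down_weight_Suc[of a m "Suc j"])
    finally show ?case .
  qed
qed

lemma monom_Suc_mult_Phi:
  assumes "\<forall>i\<le>b + m. a i \<noteq> 0" "Suc (b + m) \<le> K"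
  shows "monom 1 (Suc m) * Phi a b = - normed_comb a K (schroeder_weight a (Suc m) b)"
  using assms al_nonzero[of "Suc (b + m)" a b]
  by (intro monom_Suc_mult_Phi_of_Phistar_normed monom_mult_Phistar_normed) auto

lemma Phi_eq_normed_comb:
  assumes "\<forall>i<r. a i \<noteq> 0"
  shows "Phi a r =
    - normed_comb a r (\<lambda>s. if s = r then 1 else if Suc s = r then - down_weight a r else 0)"
proof (cases r)
  case 0
  then show ?thesis
    by (simp add: normed_comb_def Phistar_normed_0)
next
  case (Suc t)
  have nz: "a t \<noteq> 0" "al a (int t - 1) \<noteq> 0"
    using assms al_nonzero[of r a t] by (auto simp: Suc)
  have coeffs: "(\<lambda>s. if s = r then 1 else if Suc s = r then - down_weight a r else 0) =
      (\<lambda>s. (if Suc t = s then 1 else 0) + - down_weight a (Suc t) * (if t = s then 1 else 0))"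
    by (auto simp: Suc fun_eq_iff)
  have Phi_r: "Phi a r =
      smult (cnj (down_weight a (Suc t))) (Phistar_normed a t) - Phistar_normed a (Suc t)"
    by (simp add: Suc Phistar_normed_Suc[OF nz] del: Phi.simps)
  show ?thesis
    unfolding coeffs Phi_r normed_comb_add_mult by (simp add: Suc normed_comb_indicator)
qed

lemma sum_smult_triangular_eq_0:
  fixes Q :: "nat \<Rightarrow> 'a::idom poly"
  assumes "\<And>s. s \<le> N \<Longrightarrow> degree (Q s) \<le> s \<and> coeff (Q s) s \<noteq> 0"
    and "(\<Sum>s\<le>N. smult (e s) (Q s)) = 0"
  shows "s \<le> N \<Longrightarrow> e s = 0"
  using assms
proof (induction N)
  case 0
  then show ?case by auto
next
  case (Suc N)
  have "coeff (Q s) (Suc N) = 0" if "s \<le> N" for s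
    using Suc.prems(2)[of s] that by (simp add: coeff_eq_0 le_imp_less_Suc order.strict_trans1)
  then have "coeff (\<Sum>s\<le>N. smult (e s) (Q s)) (Suc N) = 0"
    by (simp add: coeff_sum)
  then have "e (Suc N) * coeff (Q (Suc N)) (Suc N) = 0"
    using arg_cong[OF Suc.prems(3), of "\<lambda>p. coeff p (Suc N)"] by simp
  then have top: "e (Suc N) = 0"
    using Suc.prems(2)[of "Suc N"] by simp
  then have "(\<Sum>s\<le>N. smult (e s) (Q s)) = 0"
    using Suc.prems(3) by simp
  with top Suc.IH Suc.prems(1,2) show ?case
    by (metis le_Suc_eq)
qed

lemma cc_eqI:
  assumes "\<forall>i<n + r. a i \<noteq> 0" "\<forall>s>n + r. c s = 0"
    and "monom 1 n * Phi a r = (\<Sum>s\<le>n + r. smult (c s) (Phistar a s))"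
  shows "cc a n r = c"
  unfolding cc_def
proof (rule the_equality)
  show "(\<forall>s>n + r. c s = 0) \<and> monom 1 n * Phi a r = (\<Sum>s\<le>n + r. smult (c s) (Phistar a s))"
    using assms(2,3) by blast
next
  fix d
  assume d: "(\<forall>s>n + r. d s = 0) \<and>
    monom 1 n * Phi a r = (\<Sum>s\<le>n + r. smult (d s) (Phistar a s))"
  then have "(\<Sum>s\<le>n + r. smult (d s - c s) (Phistar a s)) = 0"
    using assms(3) by (simp add: smult_diff_left sum_subtractf)
  then have "d s = c s" if "s \<le> n + r" for s
    using sum_smult_triangular_eq_0[of "n + r" "Phistar a" "\<lambda>s. d s - c s" s] that assms(1)
    by (auto simp: degree_Phistar_le coeff_Phistar_self al_nonzero)
  with d assms(2) show "d = c"
    by (metis ext not_le)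
qed

lemma eta_eq_of_normed_comb:
  assumes "\<forall>i<n + r. a i \<noteq> 0" "\<forall>s>n + r. w s = 0"
    and "monom 1 n * Phi a r = - normed_comb a (n + r) w"
  shows "eta a n r s = - w s / cnj (al a (int s - 1))"
proof -
  define c where "c s = - cnj (w s) / al a (int s - 1)" for s
  have "monom 1 n * Phi a r = (\<Sum>s\<le>n + r. smult (c s) (Phistar a s))"
    unfolding assms(3) normed_comb_def Phistar_normed_def c_def
    by (simp add: sum_negf divide_inverse del: Phi.simps)
  with assms(1,2) have "cc a n r = c"
    by (intro cc_eqI) (auto simp: c_def)
  then show ?thesis
    by (simp add: eta_def c_def)
qed

theorem proposition5p3:
  fixes a :: "nat \<Rightarrow> complex" and n r s :: nat
  assumes "\<forall>k. cmod (a k) < 1"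
    and "\<forall>i\<le>n+r. a i \<noteq> 0"
  shows "(n \<ge> 1 \<longrightarrow>
           eta a n r s = - inverse (cnj (al a (int s - 1))) *
             (\<Sum>p\<in>schroeder_paths n r s. wtS a (int r) p))
       \<and> (n = 0 \<longrightarrow>
           eta a 0 r s =
             (if s = r then - 1 / cnj (al a (int r - 1))
              else if int s = int r - 1 then (1 - (cmod (al a (int r - 1)))\<^sup>2) / cnj (al a (int r - 1))
              else 0))"
proof (intro conjI impI)
  assume "n \<ge> 1"
  then obtain m where n: "n = Suc m"
    by (cases n) auto
  have "monom 1 n * Phi a r = - normed_comb a (n + r) (schroeder_weight a n r)"
    using assms(2) unfolding n by (intro monom_Suc_mult_Phi) auto
  with assms(2) have "eta a n r s = - schroeder_weight a n r s / cnj (al a (int s - 1))"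
    by (intro eta_eq_of_normed_comb) (auto simp: schroeder_weight_eq_0)
  then show "eta a n r s = - inverse (cnj (al a (int s - 1))) *
      (\<Sum>p\<in>schroeder_paths n r s. wtS a (int r) p)"
    by (simp add: schroeder_weight_def divide_inverse mult.commute)
next
  assume "n = 0"
  with assms(2) have nz: "\<forall>i<r. a i \<noteq> 0"
    by auto
  then have "eta a 0 r s = - (if s = r then 1 else if Suc s = r then - down_weight a r else 0)
      / cnj (al a (int s - 1))"
    by (intro eta_eq_of_normed_comb) (auto simp: Phi_eq_normed_comb[OF nz])
  moreover have "al a (int s - 1) \<noteq> 0" if "Suc s = r"
    using nz that by (intro al_nonzero) auto
  ultimately show "eta a 0 r s =
      (if s = r then - 1 / cnj (al a (int r - 1))
       else if int s = int r - 1 then (1 - (cmod (al a (int r - 1)))\<^sup>2) / cnj (al a (int r - 1))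
       else 0)"
    by (auto simp: down_weight_def)
qed

end
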